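(* Under the hypotheses of the consensus error recursion (SGP with Assumptions (1)–(4), and the almost-sure bound $\|\bar{x}^{(t)}-z_i^{(t)}\|\le Cq^tX_0+\eta C\sum_{s=0}^tq^{t-s}\max_j\|g_j(z_j^{(s)};\xi_j^{(s)})\|$ for all $t\ge0$ and $i$, with $X_0=\max_m\|x_m^{(0)}\|$), let $M^{(t)}:=\frac1n\sum_{i=1}^n\mathbb{E}\|\bar{x}^{(t)}-z_i^{(t)}\|^2$ and $P:=1-\frac{9\eta^2C^2L^2n}{(1-q)^2}$. If $P>0$, then for every $T\ge1$, $$\sum_{t=0}^{T-1}M^{(t)}\le\frac{3C^2}{P(1-q)^2}X_0^2+\frac{3\eta^2C^2n\sigma^2}{P(1-q)^2}T+\frac{9\eta^2C^2n\zeta^2}{P(1-q)^2}T+\frac{9\eta^2C^2}{P(1-q)^2}\sum_{t=0}^{T-1}\mathbb{E}\|\nabla f(\bar{x}^{(t)})\|^2.$$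
   Context: Setting (SGP). Nodes $V=\{1,\dots,n\}$, $n\ge2$, base topology $G=(V,E)$ bidirected with self-loops; local objectives $f_i$, $f=\frac1n\sum_i f_i$; stochastic gradients $g_i(x;\xi)$ with fresh independent minibatches. SGP with nonnegative column-stochastic mixing matrices $W^{(t)}$ ($W^{(t)}_{ij}\ne0$ only if $(j,i)\in E$): $x_i^{(t+1)}=\sum_j W^{(t)}_{ij}(x_j^{(t)}-\eta g_j(z_j^{(t)};\xi_j^{(t)}))$, $w_i^{(t+1)}=\sum_jW^{(t)}_{ij}w_j^{(t)}$, $w_i^{(0)}=1$, $z_i^{(t)}=x_i^{(t)}/w_i^{(t)}$, $\bar{x}^{(t)}=\frac1n\sum_ix_i^{(t)}$. $E^{(t)}=\{(j,i)\in E:W^{(t)}_{ij}\ne0\}$, $\delta=\min_t\min_{W^{(t)}_{ij}>0}W^{(t)}_{ij}$. Assumptions: (1) each $f_i$ is $L$-smooth; (2) $\mathbb{E}\|g_i(x;\xi)-\nabla f_i(x)\|^2\le\sigma^2$ for all $i,x$; (3) $\frac1n\sum_i\|\nabla f_i(x)-\nabla f(x)\|^2\le\zeta^2$ for all $x$; (4) positive integers $B,\Delta$ exist with $(V,\bigcup_{t=lB}^{(l+1)B-1}E^{(t)})$ strongly connected of diameter at most $\Delta$ for every $l\in\mathbb{N}$. Constants: $C=4/\delta^{\Delta B}$ and $q=(1-\delta^{\Delta B})^{1/(\Delta B)}\in(0,1)$. *)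

theory Defs
  imports "HOL-Probability.Probability"
begin

text \<open>Nodes are indexed by {..<n} (i.e. 0..n-1 instead of 1..n).
  An edge (j,i) is directed from j to i.\<close>

definition active_edges :: "(nat \<times> nat) set \<Rightarrow> (nat \<Rightarrow> nat \<Rightarrow> nat \<Rightarrow> real) \<Rightarrow> nat \<Rightarrow> (nat \<times> nat) set" where
  "active_edges E W t = {(j, i). (j, i) \<in> E \<and> W t i j \<noteq> 0}"

definition strongly_connected_diam_le :: "nat set \<Rightarrow> (nat \<times> nat) set \<Rightarrow> nat \<Rightarrow> bool" where
  "strongly_connected_diam_le V R D \<longleftrightarrow>
     R \<subseteq> V \<times> V \<and> (\<forall>i\<in>V. \<forall>j\<in>V. \<exists>k\<le>D. (i, j) \<in> R ^^ k)"

end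

theory Submission
  imports Defs
begin

(* Squaring the almost-sure bound and applying Cauchy-Schwarz against the geometric weights
   q^(t-s) bounds the summed consensus error by X_0^2 and by the sum over s of the squared
   largest stochastic gradient, both with a factor of order C^2/(1-q)^2.  Each stochastic
   gradient splits into sampling noise (mean square at most sigma^2, because x^(s) only depends
   on the earlier minibatches, which are independent of the fresh ones), the smoothness drift
   L ||z_j - xbar||, the heterogeneity term and grad f(xbar).  The drift brings the consensus
   error back with coefficient 9 eta^2 C^2 L^2 n / (1-q)^2 < 1; since all iterates are square
   integrable, this term can be absorbed into the left-hand side, which produces the factor 1/P. *)

section \<open>Elementary inequalities\<close>

lemma power2_add_le_Young:
  fixes a b \<epsilon> :: real
  assumes "0 < \<epsilon>"
  shows "(a + b)\<^sup>2 \<le> (1 + \<epsilon>) * a\<^sup>2 + (1 + 1 / \<epsilon>) * b\<^sup>2"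
proof -
  have "0 \<le> (\<epsilon> * a - b)\<^sup>2 / \<epsilon>" using assms by simp
  then show ?thesis using assms by (simp add: power2_eq_square field_simps)
qed

lemma power2_sum4_le:
  fixes a b c d :: real
  shows "(a + b + c + d)\<^sup>2 \<le> 2 * a\<^sup>2 + 6 * b\<^sup>2 + 6 * c\<^sup>2 + 6 * d\<^sup>2"
proof -
  have "0 \<le> (a - (b + c + d))\<^sup>2 + 2 * ((b - c)\<^sup>2 + (c - d)\<^sup>2 + (b - d)\<^sup>2)" by simp
  then show ?thesis by (simp add: power2_eq_square algebra_simps)
qed

lemma weighted_sum_square_le:
  fixes a G :: "'i \<Rightarrow> real"
  assumes "\<And>i. i \<in> I \<Longrightarrow> 0 \<le> a i"
  shows "(\<Sum>i\<in>I. a i * G i)\<^sup>2 \<le> (\<Sum>i\<in>I. a i) * (\<Sum>i\<in>I. a i * (G i)\<^sup>2)"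
proof -
  have "(\<Sum>i\<in>I. a i * G i)\<^sup>2 = (\<Sum>i\<in>I. sqrt (a i) * (sqrt (a i) * G i))\<^sup>2"
    using assms by (intro arg_cong[where f="\<lambda>x. x\<^sup>2"] sum.cong) (auto simp: mult.assoc[symmetric])
  also have "\<dots> \<le> (\<Sum>i\<in>I. (sqrt (a i))\<^sup>2) * (\<Sum>i\<in>I. (sqrt (a i) * G i)\<^sup>2)"
    by (rule Cauchy_Schwarz_ineq_sum)
  also have "\<dots> = (\<Sum>i\<in>I. a i) * (\<Sum>i\<in>I. a i * (G i)\<^sup>2)"
    using assms by (intro arg_cong2[where f="(*)"] sum.cong) (auto simp: power_mult_distrib)
  finally show ?thesis .
qed

lemma geometric_sum_le:
  fixes q :: real
  assumes "0 \<le> q" "q < 1"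
  shows "(\<Sum>k<m. q ^ k) \<le> 1 / (1 - q)"
  using assms by (simp add: sum_gp_strict divide_right_mono)

lemma sum_power_diff_atMost: "(\<Sum>s\<le>t. q ^ (t - s)) = (\<Sum>k<Suc t. q ^ k)"
  using sum.nat_diff_reindex[of "\<lambda>k. q ^ k" "Suc t"] by (simp add: lessThan_Suc_atMost)

lemma sum_geometric_convolution_eq:
  fixes q :: "'a::comm_semiring_1"
  shows "(\<Sum>t<T. \<Sum>s\<le>t. q ^ (t - s) * Y s) = (\<Sum>s<T. (\<Sum>k<T - s. q ^ k) * Y s)"
proof (induction T)
  case (Suc T)
  have "(\<Sum>t<Suc T. \<Sum>s\<le>t. q ^ (t - s) * Y s)
      = (\<Sum>s<T. (\<Sum>k<T - s. q ^ k) * Y s) + ((\<Sum>s<T. q ^ (T - s) * Y s) + Y T)"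
    using Suc.IH by (simp add: lessThan_Suc_atMost[symmetric])
  also have "\<dots> = (\<Sum>s<Suc T. (\<Sum>k<Suc T - s. q ^ k) * Y s)"
    by (simp add: Suc_diff_le distrib_right sum.distrib add.assoc)
  finally show ?case .
qed simp

lemma sum_geometric_convolution_le:
  fixes q :: real
  assumes "0 \<le> q" "q < 1" "\<And>s. 0 \<le> Y s"
  shows "(\<Sum>t<T. \<Sum>s\<le>t. q ^ (t - s) * Y s) \<le> 1 / (1 - q) * (\<Sum>s<T. Y s)"
  unfolding sum_geometric_convolution_eq sum_distrib_left
  using assms by (intro sum_mono mult_right_mono geometric_sum_le) auto

lemma sum_square_le_of_geometric_bound:
  fixes e G :: "nat \<Rightarrow> real" and q A B :: real
  assumes q: "0 \<le> q" "q < 1"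
    and e_nonneg: "\<And>t. 0 \<le> e t"
    and e_le: "\<And>t. e t \<le> A * q ^ t + B * (\<Sum>s\<le>t. q ^ (t - s) * G s)"
  shows "(\<Sum>t<T. (e t)\<^sup>2) \<le> 3 * A\<^sup>2 / (1 - q)\<^sup>2 + 3 / 2 * B\<^sup>2 / (1 - q)\<^sup>2 * (\<Sum>s<T. (G s)\<^sup>2)"
proof -
  have e_sq: "(e t)\<^sup>2 \<le> 3 * A\<^sup>2 * (q\<^sup>2) ^ t + 3 / 2 * B\<^sup>2 / (1 - q) * (\<Sum>s\<le>t. q ^ (t - s) * (G s)\<^sup>2)" for t
  proof -
    define S where "S = (\<Sum>s\<le>t. q ^ (t - s) * G s)"
    have "S\<^sup>2 \<le> (\<Sum>s\<le>t. q ^ (t - s)) * (\<Sum>s\<le>t. q ^ (t - s) * (G s)\<^sup>2)"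
      unfolding S_def using q by (intro weighted_sum_square_le) auto
    also have "\<dots> \<le> 1 / (1 - q) * (\<Sum>s\<le>t. q ^ (t - s) * (G s)\<^sup>2)"
      unfolding sum_power_diff_atMost using q by (intro mult_right_mono geometric_sum_le sum_nonneg) auto
    finally have S_sq: "S\<^sup>2 \<le> 1 / (1 - q) * (\<Sum>s\<le>t. q ^ (t - s) * (G s)\<^sup>2)" .
    have "(e t)\<^sup>2 \<le> (A * q ^ t + B * S)\<^sup>2"
      using e_nonneg e_le unfolding S_def by (intro power_mono) auto
    also have "\<dots> \<le> 3 * (A * q ^ t)\<^sup>2 + 3 / 2 * (B * S)\<^sup>2"
      using power2_add_le_Young[of 2 "A * q ^ t" "B * S"] by simp
    also have "\<dots> \<le> 3 * A\<^sup>2 * (q\<^sup>2) ^ t + 3 / 2 * B\<^sup>2 / (1 - q) * (\<Sum>s\<le>t. q ^ (t - s) * (G s)\<^sup>2)"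
      using mult_left_mono[OF S_sq, of "3 / 2 * B\<^sup>2"]
      by (simp add: power_mult_distrib power_mult[symmetric] mult.commute[of 2] mult.assoc)
    finally show ?thesis .
  qed
  have geo_sq: "(\<Sum>t<T. (q\<^sup>2) ^ t) \<le> 1 / (1 - q)\<^sup>2"
  proof -
    have "(\<Sum>t<T. (q\<^sup>2) ^ t) \<le> 1 / (1 - q\<^sup>2)"
      using q by (intro geometric_sum_le) (auto simp: power_less_one_iff)
    also have "\<dots> \<le> 1 / (1 - q)\<^sup>2"
    proof (rule divide_left_mono)
      show "(1 - q)\<^sup>2 \<le> 1 - q\<^sup>2"
        using q by (simp add: power2_eq_square algebra_simps mult_left_le_one_le)
      show "0 < (1 - q\<^sup>2) * (1 - q)\<^sup>2"
        using q by (simp add: power_less_one_iff)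
    qed simp
    finally show ?thesis .
  qed
  have "(\<Sum>t<T. (e t)\<^sup>2) \<le> 3 * A\<^sup>2 * (\<Sum>t<T. (q\<^sup>2) ^ t) + 3 / 2 * B\<^sup>2 / (1 - q) * (\<Sum>t<T. \<Sum>s\<le>t. q ^ (t - s) * (G s)\<^sup>2)"
    using sum_mono[of "{..<T}", OF e_sq] by (simp add: sum.distrib sum_distrib_left)
  also have "\<dots> \<le> 3 * A\<^sup>2 * (1 / (1 - q)\<^sup>2) + 3 / 2 * B\<^sup>2 / (1 - q) * (1 / (1 - q) * (\<Sum>s<T. (G s)\<^sup>2))"
    using q geo_sq by (intro add_mono mult_left_mono sum_geometric_convolution_le) auto
  also have "\<dots> = 3 * A\<^sup>2 / (1 - q)\<^sup>2 + 3 / 2 * B\<^sup>2 / (1 - q)\<^sup>2 * (\<Sum>s<T. (G s)\<^sup>2)"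
    by (simp add: power2_eq_square)
  finally show ?thesis .
qed

lemma ennreal_mult_le_absorb:
  fixes X Y :: ennreal and u l c k P :: real
  assumes Y_fin: "Y < \<infinity>" and l: "0 \<le> l" and u: "0 < u" and P: "P = 1 - l / u" "0 < P"
    and c: "0 \<le> c" and k: "0 \<le> k"
    and le: "ennreal u * Y \<le> ennreal c + ennreal l * Y + ennreal k * X"
  shows "ennreal u * Y \<le> ennreal (c / P) + ennreal (k / P) * X"
proof -
  have "l / u < 1" using P by simp
  then have lu: "l < u" using u by (simp add: field_simps)
  have "ennreal l * Y + ennreal (u - l) * Y = ennreal u * Y"
    using l lu by (simp add: distrib_right[symmetric] ennreal_plus[symmetric] del: ennreal_plus)
  also have "\<dots> \<le> ennreal l * Y + (ennreal c + ennreal k * X)"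
    using le by (simp add: ac_simps)
  finally have "ennreal (u - l) * Y \<le> ennreal c + ennreal k * X"
    using Y_fin by (subst (asm) ennreal_add_left_cancel_le) (auto simp: ennreal_mult_eq_top_iff)
  then have "ennreal (u / (u - l)) * (ennreal (u - l) * Y) \<le> ennreal (1 / P) * (ennreal c + ennreal k * X)"
    using P u lu by (intro mult_mono) (auto simp: field_simps)
  moreover have "ennreal (u / (u - l)) * ennreal (u - l) = ennreal u"
    using lu u by (subst ennreal_mult[symmetric]) auto
  then have "ennreal (u / (u - l)) * (ennreal (u - l) * Y) = ennreal u * Y"
    by (simp add: mult.assoc[symmetric])
  moreover have "ennreal (1 / P) * (ennreal c + ennreal k * X) = ennreal (c / P) + ennreal (k / P) * X"
    using P c k by (simp add: distrib_left mult.assoc[symmetric] ennreal_mult[symmetric] del: ennreal_mult)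
  ultimately show ?thesis by simp
qed

lemma Max_norm_square_le_gradient_split:
  fixes u z :: "nat \<Rightarrow> 'd::real_normed_vector" and Df :: "nat \<Rightarrow> 'd \<Rightarrow> 'd" and y :: 'd
  assumes n: "0 < n"
    and lip: "\<And>i a b. i < n \<Longrightarrow> norm (Df i a - Df i b) \<le> L * norm (a - b)"
    and het: "1 / real n * (\<Sum>i<n. (norm (Df i y - (1 / real n) *\<^sub>R (\<Sum>k<n. Df k y)))\<^sup>2) \<le> \<zeta>\<^sup>2"
  shows "(Max ((\<lambda>j. norm (u j)) ` {..<n}))\<^sup>2
    \<le> 2 * (\<Sum>j<n. (norm (u j - Df j (z j)))\<^sup>2) + 6 * L\<^sup>2 * (\<Sum>j<n. (norm (y - z j))\<^sup>2)
      + 6 * real n * \<zeta>\<^sup>2 + 6 * (norm ((1 / real n) *\<^sub>R (\<Sum>k<n. Df k y)))\<^sup>2"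
proof -
  define gf where "gf = (1 / real n) *\<^sub>R (\<Sum>k<n. Df k y)"
  have "Max ((\<lambda>j. norm (u j)) ` {..<n}) \<in> (\<lambda>j. norm (u j)) ` {..<n}"
    using n by (intro Max_in) auto
  then obtain j where j: "j < n" and Max_eq: "Max ((\<lambda>j. norm (u j)) ` {..<n}) = norm (u j)"
    by auto
  define u1 where "u1 = u j - Df j (z j)"
  define u2 where "u2 = Df j (z j) - Df j y"
  define u3 where "u3 = Df j y - gf"
  have "norm (u j) \<le> norm u1 + norm u2 + norm u3 + norm gf"
    using norm_triangle_ineq4[of u1 "-u2"] norm_triangle_ineq[of "u1 + u2" u3]
      norm_triangle_ineq[of "u1 + u2 + u3" gf] norm_triangle_ineq[of u1 u2]
    by (simp add: u1_def u2_def u3_def)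
  then have "(norm (u j))\<^sup>2 \<le> (norm u1 + norm u2 + norm u3 + norm gf)\<^sup>2"
    by (intro power_mono) auto
  also have "\<dots> \<le> 2 * (norm u1)\<^sup>2 + 6 * (norm u2)\<^sup>2 + 6 * (norm u3)\<^sup>2 + 6 * (norm gf)\<^sup>2"
    by (rule power2_sum4_le)
  also have "\<dots> \<le> 2 * (\<Sum>j<n. (norm (u j - Df j (z j)))\<^sup>2) + 6 * L\<^sup>2 * (\<Sum>j<n. (norm (y - z j))\<^sup>2)
      + 6 * real n * \<zeta>\<^sup>2 + 6 * (norm gf)\<^sup>2"
  proof -
    have noise: "(norm u1)\<^sup>2 \<le> (\<Sum>j<n. (norm (u j - Df j (z j)))\<^sup>2)"
      unfolding u1_def using j by (intro member_le_sum[where f="\<lambda>j. (norm (u j - Df j (z j)))\<^sup>2"]) auto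
    have "(norm u2)\<^sup>2 \<le> (L * norm (y - z j))\<^sup>2"
      unfolding u2_def using lip[OF j, of "z j" y] by (intro power_mono) (auto simp: norm_minus_commute)
    also have "\<dots> \<le> L\<^sup>2 * (\<Sum>j<n. (norm (y - z j))\<^sup>2)"
      unfolding power_mult_distrib
      using j by (intro mult_left_mono member_le_sum[where f="\<lambda>j. (norm (y - z j))\<^sup>2"]) auto
    finally have drift: "(norm u2)\<^sup>2 \<le> L\<^sup>2 * (\<Sum>j<n. (norm (y - z j))\<^sup>2)" .
    have "(norm u3)\<^sup>2 \<le> (\<Sum>i<n. (norm (Df i y - gf))\<^sup>2)"
      unfolding u3_def using j by (intro member_le_sum[where f="\<lambda>i. (norm (Df i y - gf))\<^sup>2"]) auto
    also have "\<dots> \<le> real n * \<zeta>\<^sup>2"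
      using het n by (simp add: gf_def field_simps)
    finally have heterogeneity: "(norm u3)\<^sup>2 \<le> real n * \<zeta>\<^sup>2" .
    show ?thesis using noise drift heterogeneity by linarith
  qed
  finally show ?thesis by (simp add: Max_eq gf_def)
qed

lemma Inf_positive_entries_le_one:
  fixes W :: "nat \<Rightarrow> nat \<Rightarrow> nat \<Rightarrow> real"
  assumes n: "0 < n" and nonneg: "\<And>t i j. 0 \<le> W t i j"
    and col_stoch: "\<And>t j. j < n \<Longrightarrow> (\<Sum>i<n. W t i j) = 1"
  shows "Inf {W t i j |t i j. i < n \<and> j < n \<and> 0 < W t i j} \<le> 1"
proof -
  have "\<exists>i<n. 0 < W 0 i 0"
  proof (rule ccontr)
    assume "\<not> (\<exists>i<n. 0 < W 0 i 0)"
    then have "(\<Sum>i<n. W 0 i 0) = 0" using nonneg by (intro sum.neutral) (auto simp: less_le)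
    then show False using col_stoch[OF n] by simp
  qed
  then obtain i where i: "i < n" "0 < W 0 i 0" by blast
  have "Inf {W t i j |t i j. i < n \<and> j < n \<and> 0 < W t i j} \<le> W 0 i 0"
    using i n nonneg by (intro cInf_lower bdd_belowI[where m=0]) blast+
  also have "\<dots> \<le> (\<Sum>i<n. W 0 i 0)"
    using i nonneg by (intro member_le_sum) auto
  finally show ?thesis using col_stoch[OF n] by simp
qed

section \<open>Second moments and independence\<close>

definition square_integrable :: "'a measure \<Rightarrow> ('a \<Rightarrow> 'b::real_normed_vector) \<Rightarrow> bool" where
  "square_integrable M Y \<longleftrightarrow>
     Y \<in> borel_measurable M \<and> (\<integral>\<^sup>+ \<omega>. ennreal ((norm (Y \<omega>))\<^sup>2) \<partial>M) < \<infinity>"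

lemma square_integrableI:
  "Y \<in> borel_measurable M \<Longrightarrow> (\<integral>\<^sup>+ \<omega>. ennreal ((norm (Y \<omega>))\<^sup>2) \<partial>M) \<le> ennreal c \<Longrightarrow>
    square_integrable M Y"
  unfolding square_integrable_def using order.strict_trans1[OF _ ennreal_less_top[of c]] by auto

lemma (in finite_measure) square_integrable_const: "square_integrable M (\<lambda>_. c)"
  unfolding square_integrable_def using emeasure_finite[of "space M"]
  by (simp add: less_top[symmetric] ennreal_mult_eq_top_iff)

lemma square_integrable_cong:
  "square_integrable M Y \<Longrightarrow> (\<And>\<omega>. \<omega> \<in> space M \<Longrightarrow> Y \<omega> = Y' \<omega>) \<Longrightarrow> square_integrable M Y'"
  unfolding square_integrable_def
  by (metis (no_types, lifting) measurable_cong nn_integral_cong)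

lemma square_integrable_dominated:
  assumes Y: "square_integrable M Y" and Y': "Y' \<in> borel_measurable M"
    and le: "\<And>\<omega>. \<omega> \<in> space M \<Longrightarrow> norm (Y' \<omega>) \<le> c * norm (Y \<omega>)"
  shows "square_integrable M Y'"
proof -
  have "(\<integral>\<^sup>+ \<omega>. ennreal ((norm (Y' \<omega>))\<^sup>2) \<partial>M) \<le> (\<integral>\<^sup>+ \<omega>. ennreal (c\<^sup>2) * ennreal ((norm (Y \<omega>))\<^sup>2) \<partial>M)"
  proof (rule nn_integral_mono)
    fix \<omega> assume "\<omega> \<in> space M"
    then have "(norm (Y' \<omega>))\<^sup>2 \<le> (c * norm (Y \<omega>))\<^sup>2" using le by (intro power_mono) auto
    then show "ennreal ((norm (Y' \<omega>))\<^sup>2) \<le> ennreal (c\<^sup>2) * ennreal ((norm (Y \<omega>))\<^sup>2)"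
      by (simp add: ennreal_mult[symmetric] power_mult_distrib)
  qed
  also have "\<dots> = ennreal (c\<^sup>2) * (\<integral>\<^sup>+ \<omega>. ennreal ((norm (Y \<omega>))\<^sup>2) \<partial>M)"
    using Y unfolding square_integrable_def by (intro nn_integral_cmult) auto
  also have "\<dots> < \<infinity>" using Y unfolding square_integrable_def by (simp add: ennreal_mult_less_top)
  finally show ?thesis using Y' unfolding square_integrable_def by auto
qed

lemma square_integrable_scaleR: "square_integrable M Y \<Longrightarrow> square_integrable M (\<lambda>\<omega>. c *\<^sub>R Y \<omega>)"
  by (rule square_integrable_dominated[where c="\<bar>c\<bar>"]) (auto simp: square_integrable_def)

lemma square_integrable_add:
  fixes Y Y' :: "'a \<Rightarrow> 'b::{real_normed_vector, second_countable_topology}"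
  assumes Y: "square_integrable M Y" and Y': "square_integrable M Y'"
  shows "square_integrable M (\<lambda>\<omega>. Y \<omega> + Y' \<omega>)"
proof -
  have [measurable]: "Y \<in> borel_measurable M" "Y' \<in> borel_measurable M"
    using Y Y' by (auto simp: square_integrable_def)
  have "(\<integral>\<^sup>+ \<omega>. ennreal ((norm (Y \<omega> + Y' \<omega>))\<^sup>2) \<partial>M)
      \<le> (\<integral>\<^sup>+ \<omega>. 2 * ennreal ((norm (Y \<omega>))\<^sup>2) + 2 * ennreal ((norm (Y' \<omega>))\<^sup>2) \<partial>M)"
  proof (rule nn_integral_mono)
    fix \<omega>
    have "(norm (Y \<omega> + Y' \<omega>))\<^sup>2 \<le> (norm (Y \<omega>) + norm (Y' \<omega>))\<^sup>2"
      by (intro power_mono norm_triangle_ineq) auto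
    also have "\<dots> \<le> 2 * (norm (Y \<omega>))\<^sup>2 + 2 * (norm (Y' \<omega>))\<^sup>2"
      using power2_add_le_Young[of 1 "norm (Y \<omega>)" "norm (Y' \<omega>)"] by simp
    finally have "ennreal ((norm (Y \<omega> + Y' \<omega>))\<^sup>2)
        \<le> ennreal (2 * (norm (Y \<omega>))\<^sup>2 + 2 * (norm (Y' \<omega>))\<^sup>2)"
      by (rule ennreal_leI)
    then show "ennreal ((norm (Y \<omega> + Y' \<omega>))\<^sup>2)
        \<le> 2 * ennreal ((norm (Y \<omega>))\<^sup>2) + 2 * ennreal ((norm (Y' \<omega>))\<^sup>2)"
      by (simp add: ennreal_mult)
  qed
  also have "\<dots> = 2 * (\<integral>\<^sup>+ \<omega>. ennreal ((norm (Y \<omega>))\<^sup>2) \<partial>M) + 2 * (\<integral>\<^sup>+ \<omega>. ennreal ((norm (Y' \<omega>))\<^sup>2) \<partial>M)"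
    by (simp add: nn_integral_add nn_integral_cmult)
  also have "\<dots> < \<infinity>" using Y Y' unfolding square_integrable_def by (simp add: ennreal_mult_less_top)
  finally show ?thesis unfolding square_integrable_def by auto
qed

lemma square_integrable_diff:
  fixes Y Y' :: "'a \<Rightarrow> 'b::{real_normed_vector, second_countable_topology}"
  shows "square_integrable M Y \<Longrightarrow> square_integrable M Y' \<Longrightarrow> square_integrable M (\<lambda>\<omega>. Y \<omega> - Y' \<omega>)"
  using square_integrable_add[of M Y "\<lambda>\<omega>. (-1) *\<^sub>R Y' \<omega>"] square_integrable_scaleR[of M Y' "-1"]
  by simp

lemma (in finite_measure) square_integrable_sum:
  fixes Y :: "'i \<Rightarrow> 'a \<Rightarrow> 'b::{real_normed_vector, second_countable_topology}"
  shows "(\<And>i. i \<in> I \<Longrightarrow> square_integrable M (Y i)) \<Longrightarrow> square_integrable M (\<lambda>\<omega>. \<Sum>i\<in>I. Y i \<omega>)"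
  by (induction I rule: infinite_finite_induct) (auto intro: square_integrable_const square_integrable_add)

lemma (in prob_space) nn_integral_indep_component_le:
  assumes indep: "indep_vars (\<lambda>_. S) X I" and A: "A \<subseteq> I" "p \<in> I" "p \<notin> A"
    and \<phi>: "\<phi> \<in> PiM A (\<lambda>_. S) \<rightarrow>\<^sub>M N"
    and H: "case_prod H \<in> borel_measurable (N \<Otimes>\<^sub>M S)"
    and bound: "\<And>y. (\<integral>\<^sup>+ \<omega>. H y (X p \<omega>) \<partial>M) \<le> c"
  shows "(\<integral>\<^sup>+ \<omega>. H (\<phi> (restrict (\<lambda>i. X i \<omega>) A)) (X p \<omega>) \<partial>M) \<le> c"
proof -
  define U where "U = (\<lambda>\<omega>. restrict (\<lambda>i. X i \<omega>) A)"
  define V where "V = (\<lambda>\<omega>. restrict (\<lambda>i. X i \<omega>) {p})"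
  define MU where "MU = distr M (PiM A (\<lambda>_. S)) U"
  define MV where "MV = distr M (PiM {p} (\<lambda>_. S)) V"
  have "indep_var (PiM A (\<lambda>_. S)) U (PiM {p} (\<lambda>_. S)) V"
    unfolding U_def V_def using indep A by (intro indep_var_restrict) auto
  then have U: "random_variable (PiM A (\<lambda>_. S)) U" and V: "random_variable (PiM {p} (\<lambda>_. S)) V"
    and joint: "MU \<Otimes>\<^sub>M MV = distr M (PiM A (\<lambda>_. S) \<Otimes>\<^sub>M PiM {p} (\<lambda>_. S)) (\<lambda>\<omega>. (U \<omega>, V \<omega>))"
    unfolding MU_def MV_def using indep_var_distribution_eq by blast+
  interpret MU: prob_space MU unfolding MU_def by (rule prob_space_distr[OF U])
  interpret MV: prob_space MV unfolding MV_def by (rule prob_space_distr[OF V])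
  define H' where "H' = (\<lambda>(u, v). H (\<phi> u) (v p))"
  have H'_measurable: "H' \<in> borel_measurable (PiM A (\<lambda>_. S) \<Otimes>\<^sub>M PiM {p} (\<lambda>_. S))"
  proof -
    have "(\<lambda>z. (\<phi> (fst z), snd z p)) \<in> PiM A (\<lambda>_. S) \<Otimes>\<^sub>M PiM {p} (\<lambda>_. S) \<rightarrow>\<^sub>M N \<Otimes>\<^sub>M S"
      using \<phi> by measurable
    from measurable_comp[OF this H] show ?thesis by (simp add: H'_def o_def case_prod_beta)
  qed
  have H'_section: "(\<integral>\<^sup>+ v. H' (u, v) \<partial>MV) \<le> c" if "u \<in> space MU" for u
  proof -
    have "(\<lambda>v. (\<phi> u, v p)) \<in> PiM {p} (\<lambda>_. S) \<rightarrow>\<^sub>M N \<Otimes>\<^sub>M S"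
      using \<phi> that by (auto simp: MU_def intro: measurable_component_singleton)
    from measurable_comp[OF this H] have "(\<lambda>v. H' (u, v)) \<in> borel_measurable (PiM {p} (\<lambda>_. S))"
      by (simp add: H'_def o_def)
    then have "(\<integral>\<^sup>+ v. H' (u, v) \<partial>MV) = (\<integral>\<^sup>+ \<omega>. H (\<phi> u) (X p \<omega>) \<partial>M)"
      unfolding MV_def using V by (subst nn_integral_distr) (auto simp: H'_def V_def)
    then show ?thesis using bound by simp
  qed
  have "(\<integral>\<^sup>+ \<omega>. H (\<phi> (U \<omega>)) (X p \<omega>) \<partial>M) = (\<integral>\<^sup>+ \<omega>. H' (U \<omega>, V \<omega>) \<partial>M)"
    by (simp add: H'_def V_def)
  also have "\<dots> = (\<integral>\<^sup>+ z. H' z \<partial>(MU \<Otimes>\<^sub>M MV))"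
    unfolding joint using H'_measurable U V by (subst nn_integral_distr) (auto intro: measurable_Pair)
  also have "\<dots> = (\<integral>\<^sup>+ u. \<integral>\<^sup>+ v. H' (u, v) \<partial>MV \<partial>MU)"
    using H'_measurable by (subst MV.nn_integral_fst[symmetric]) (auto simp: MU_def MV_def)
  also have "\<dots> \<le> (\<integral>\<^sup>+ u. c \<partial>MU)"
    by (intro nn_integral_mono H'_section) simp
  also have "\<dots> = c" using MU.emeasure_space_1 by simp
  finally show ?thesis by (simp add: U_def)
qed

section \<open>Consensus error of stochastic gradient push\<close>

(* The SGP iterate x_i^(t) as a deterministic function of the sample path v, where v (j, s) is
   the minibatch drawn by node j at time s. *)
primrec sgp_iter :: "nat \<Rightarrow> (nat \<Rightarrow> nat \<Rightarrow> nat \<Rightarrow> real) \<Rightarrow> (nat \<Rightarrow> nat \<Rightarrow> real) \<Rightarrow> real \<Rightarrow>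
    (nat \<Rightarrow> 'd::real_vector \<Rightarrow> 'b \<Rightarrow> 'd) \<Rightarrow> (nat \<Rightarrow> 'd) \<Rightarrow> nat \<Rightarrow> nat \<Rightarrow> (nat \<times> nat \<Rightarrow> 'b) \<Rightarrow> 'd"
where
  "sgp_iter n W w \<eta> g x0 0 i v = x0 i"
| "sgp_iter n W w \<eta> g x0 (Suc t) i v =
     (\<Sum>j<n. W t i j *\<^sub>R (sgp_iter n W w \<eta> g x0 t j v
        - \<eta> *\<^sub>R g j ((1 / w t j) *\<^sub>R sgp_iter n W w \<eta> g x0 t j v) (v (j, t))))"

lemma sgp_iter_cong:
  assumes "\<And>j s. j < n \<Longrightarrow> s < t \<Longrightarrow> v (j, s) = v' (j, s)"
  shows "sgp_iter n W w \<eta> g x0 t i v = sgp_iter n W w \<eta> g x0 t i v'"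
  using assms by (induction t arbitrary: i) (auto intro!: sum.cong)

lemma sgp_iter_measurable:
  fixes g :: "nat \<Rightarrow> 'd::euclidean_space \<Rightarrow> 'b \<Rightarrow> 'd"
  assumes g: "\<And>j. j < n \<Longrightarrow> (\<lambda>(y, b). g j y b) \<in> borel \<Otimes>\<^sub>M S \<rightarrow>\<^sub>M borel"
    and I: "{..<n} \<times> {..<t} \<subseteq> I"
  shows "sgp_iter n W w \<eta> g x0 t i \<in> borel_measurable (PiM I (\<lambda>_. S))"
  using I
proof (induction t arbitrary: i)
  case (Suc t)
  have IH: "sgp_iter n W w \<eta> g x0 t j \<in> borel_measurable (PiM I (\<lambda>_. S))" for j
    using Suc by force
  have "(\<lambda>v. g j ((1 / w t j) *\<^sub>R sgp_iter n W w \<eta> g x0 t j v) (v (j, t)))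
      \<in> borel_measurable (PiM I (\<lambda>_. S))" if j: "j < n" for j
  proof -
    have "(\<lambda>v. ((1 / w t j) *\<^sub>R sgp_iter n W w \<eta> g x0 t j v, v (j, t))) \<in> PiM I (\<lambda>_. S) \<rightarrow>\<^sub>M borel \<Otimes>\<^sub>M S"
      using IH Suc.prems j by (intro measurable_Pair) (auto intro: measurable_component_singleton)
    from measurable_compose[OF this g[OF j]] show ?thesis by simp
  qed
  then show ?case using IH by simp
next
  case 0
  have "sgp_iter n W w \<eta> g x0 0 i = (\<lambda>_. x0 i)" by auto
  then show ?case by simp
qed

locale sgp = prob_space M
  for M :: "'a measure" and S :: "'b measure" and n :: nat
    and W :: "nat \<Rightarrow> nat \<Rightarrow> nat \<Rightarrow> real" and w :: "nat \<Rightarrow> nat \<Rightarrow> real" and \<eta> :: real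
    and g :: "nat \<Rightarrow> 'd::euclidean_space \<Rightarrow> 'b \<Rightarrow> 'd" and \<xi> :: "nat \<Rightarrow> nat \<Rightarrow> 'a \<Rightarrow> 'b"
    and x0 :: "nat \<Rightarrow> 'd" and x :: "nat \<Rightarrow> nat \<Rightarrow> 'a \<Rightarrow> 'd"
    and Df :: "nat \<Rightarrow> 'd \<Rightarrow> 'd" and L \<sigma> \<zeta> :: real +
  assumes n_pos: "0 < n"
    and \<xi>_measurable: "\<And>j t. \<xi> j t \<in> M \<rightarrow>\<^sub>M S"
    and \<xi>_indep: "indep_vars (\<lambda>_. S) (\<lambda>(j, t). \<xi> j t) ({..<n} \<times> UNIV)"
    and g_measurable: "\<And>j. j < n \<Longrightarrow> (\<lambda>(y, b). g j y b) \<in> borel \<Otimes>\<^sub>M S \<rightarrow>\<^sub>M borel"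
    and Df_lipschitz: "\<And>i y y'. i < n \<Longrightarrow> norm (Df i y - Df i y') \<le> L * norm (y - y')"
    and noise_variance: "\<And>j t y. j < n \<Longrightarrow>
      (\<integral>\<^sup>+ \<omega>. ennreal ((norm (g j y (\<xi> j t \<omega>) - Df j y))\<^sup>2) \<partial>M) \<le> ennreal (\<sigma>\<^sup>2)"
    and heterogeneity: "\<And>y. 1 / real n * (\<Sum>i<n. (norm (Df i y - (1 / real n) *\<^sub>R (\<Sum>k<n. Df k y)))\<^sup>2) \<le> \<zeta>\<^sup>2"
    and x_0: "\<And>i \<omega>. \<omega> \<in> space M \<Longrightarrow> x 0 i \<omega> = x0 i"
    and x_Suc: "\<And>t i \<omega>. \<omega> \<in> space M \<Longrightarrow> x (Suc t) i \<omega> =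
      (\<Sum>j<n. W t i j *\<^sub>R (x t j \<omega> - \<eta> *\<^sub>R g j ((1 / w t j) *\<^sub>R x t j \<omega>) (\<xi> j t \<omega>)))"
begin

definition z_iter :: "nat \<Rightarrow> nat \<Rightarrow> 'a \<Rightarrow> 'd" where
  "z_iter t j \<omega> = (1 / w t j) *\<^sub>R x t j \<omega>"

definition x_avg :: "nat \<Rightarrow> 'a \<Rightarrow> 'd" where
  "x_avg t \<omega> = (1 / real n) *\<^sub>R (\<Sum>m<n. x t m \<omega>)"

definition stoch_grad :: "nat \<Rightarrow> nat \<Rightarrow> 'a \<Rightarrow> 'd" where
  "stoch_grad t j \<omega> = g j (z_iter t j \<omega>) (\<xi> j t \<omega>)"

definition grad_f :: "'d \<Rightarrow> 'd" where
  "grad_f y = (1 / real n) *\<^sub>R (\<Sum>k<n. Df k y)"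

lemma x_eq_sgp_iter:
  assumes "\<omega> \<in> space M"
  shows "x t i \<omega> = sgp_iter n W w \<eta> g x0 t i (restrict (\<lambda>(j, s). \<xi> j s \<omega>) ({..<n} \<times> {..<t}))"
proof -
  have "x t i \<omega> = sgp_iter n W w \<eta> g x0 t i (\<lambda>(j, s). \<xi> j s \<omega>)"
    using assms by (induction t arbitrary: i) (simp_all add: x_0 x_Suc)
  also have "\<dots> = sgp_iter n W w \<eta> g x0 t i (restrict (\<lambda>(j, s). \<xi> j s \<omega>) ({..<n} \<times> {..<t}))"
    by (rule sgp_iter_cong) auto
  finally show ?thesis .
qed

lemma samples_measurable: "(\<lambda>\<omega>. restrict (\<lambda>(j, s). \<xi> j s \<omega>) A) \<in> M \<rightarrow>\<^sub>M PiM A (\<lambda>_. S)"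
  using \<xi>_measurable by (intro measurable_restrict) (auto split: prod.split)

lemma x_measurable [measurable]: "x t i \<in> borel_measurable M"
proof -
  have "(\<lambda>\<omega>. sgp_iter n W w \<eta> g x0 t i (restrict (\<lambda>(j, s). \<xi> j s \<omega>) ({..<n} \<times> {..<t})))
      \<in> borel_measurable M"
    by (rule measurable_compose[OF samples_measurable sgp_iter_measurable[OF g_measurable]]) auto
  then show ?thesis by (rule measurable_cong[THEN iffD1, rotated]) (simp add: x_eq_sgp_iter)
qed

lemma Df_measurable [measurable]:
  assumes "i < n"
  shows "Df i \<in> borel_measurable borel"
proof (intro borel_measurable_continuous_onI lipschitz_on_continuous_on lipschitz_onI)
  show "dist (Df i y) (Df i y') \<le> \<bar>L\<bar> * dist y y'" for y y'
    using Df_lipschitz[OF assms, of y y'] abs_ge_self[of L]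
    by (simp add: dist_norm) (meson mult_right_mono norm_ge_zero order_trans)
qed simp

lemma z_iter_measurable [measurable]: "z_iter t j \<in> borel_measurable M"
  unfolding z_iter_def by measurable

lemma x_avg_measurable [measurable]: "x_avg t \<in> borel_measurable M"
  unfolding x_avg_def by measurable

lemma grad_f_measurable [measurable]: "grad_f \<in> borel_measurable borel"
  unfolding grad_f_def by (intro borel_measurable_scaleR borel_measurable_sum Df_measurable) auto

lemma stoch_grad_measurable [measurable]:
  assumes "j < n"
  shows "stoch_grad t j \<in> borel_measurable M"
proof -
  have "(\<lambda>\<omega>. (z_iter t j \<omega>, \<xi> j t \<omega>)) \<in> M \<rightarrow>\<^sub>M borel \<Otimes>\<^sub>M S"
    using \<xi>_measurable by measurable
  from measurable_compose[OF this g_measurable[OF assms]] show ?thesis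
    by (simp add: stoch_grad_def[abs_def])
qed

lemma gradient_noise_le:
  assumes j: "j < n"
  shows "(\<integral>\<^sup>+ \<omega>. ennreal ((norm (stoch_grad t j \<omega> - Df j (z_iter t j \<omega>)))\<^sup>2) \<partial>M) \<le> ennreal (\<sigma>\<^sup>2)"
proof -
  define H where "H = (\<lambda>y b. ennreal ((norm (g j y b - Df j y))\<^sup>2))"
  define \<phi> where "\<phi> = (\<lambda>v. (1 / w t j) *\<^sub>R sgp_iter n W w \<eta> g x0 t j v)"
  have H: "case_prod H \<in> borel_measurable (borel \<Otimes>\<^sub>M S)"
    using g_measurable[OF j] Df_measurable[OF j] by (simp add: H_def case_prod_beta) measurable
  have \<phi>: "\<phi> \<in> borel_measurable (PiM ({..<n} \<times> {..<t}) (\<lambda>_. S))"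
    unfolding \<phi>_def by (intro borel_measurable_scaleR borel_measurable_const sgp_iter_measurable g_measurable) auto
  have samples: "(\<lambda>(j, s). \<xi> j s) p \<omega> = (\<lambda>(j, s). \<xi> j s \<omega>) p" for p \<omega>
    by (cases p) simp
  have "(\<integral>\<^sup>+ \<omega>. ennreal ((norm (stoch_grad t j \<omega> - Df j (z_iter t j \<omega>)))\<^sup>2) \<partial>M)
      = (\<integral>\<^sup>+ \<omega>. H (\<phi> (restrict (\<lambda>(j, s). \<xi> j s \<omega>) ({..<n} \<times> {..<t}))) (\<xi> j t \<omega>) \<partial>M)"
    by (intro nn_integral_cong) (simp add: H_def \<phi>_def stoch_grad_def z_iter_def x_eq_sgp_iter)
  also have "\<dots> \<le> ennreal (\<sigma>\<^sup>2)"
    using nn_integral_indep_component_le[OF \<xi>_indep _ _ _ \<phi> H, of "(j, t)"] j noise_variance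
    by (simp only: samples) (auto simp: H_def)
  finally show ?thesis .
qed

lemma stoch_grad_square_integrable:
  assumes j: "j < n" and x: "square_integrable M (x t j)"
  shows "square_integrable M (stoch_grad t j)"
proof -
  have z: "square_integrable M (z_iter t j)"
    unfolding z_iter_def by (rule square_integrable_scaleR[OF x])
  have noise: "square_integrable M (\<lambda>\<omega>. stoch_grad t j \<omega> - Df j (z_iter t j \<omega>))"
    using j by (intro square_integrableI[OF _ gradient_noise_le]) measurable
  have drift: "square_integrable M (\<lambda>\<omega>. Df j (z_iter t j \<omega>) - Df j 0)"
  proof (rule square_integrable_dominated[OF z, where c="\<bar>L\<bar>"])
    show "(\<lambda>\<omega>. Df j (z_iter t j \<omega>) - Df j 0) \<in> borel_measurable M"
      using j by measurable
    show "norm (Df j (z_iter t j \<omega>) - Df j 0) \<le> \<bar>L\<bar> * norm (z_iter t j \<omega>)" for \<omega>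
      using Df_lipschitz[OF j, of "z_iter t j \<omega>" 0]
      by (simp add: order_trans[OF _ mult_right_mono])
  qed
  have "square_integrable M (\<lambda>\<omega>. (stoch_grad t j \<omega> - Df j (z_iter t j \<omega>))
      + (Df j (z_iter t j \<omega>) - Df j 0) + Df j 0)"
    by (intro square_integrable_add noise drift square_integrable_const)
  then show ?thesis by (rule square_integrable_cong) simp
qed

lemma x_square_integrable: "i < n \<Longrightarrow> square_integrable M (x t i)"
proof (induction t arbitrary: i)
  case 0
  show ?case by (rule square_integrable_cong[OF square_integrable_const]) (simp add: x_0)
next
  case (Suc t)
  have "square_integrable M (\<lambda>\<omega>. \<Sum>j<n. W t i j *\<^sub>R (x t j \<omega> - \<eta> *\<^sub>R stoch_grad t j \<omega>))"
    using Suc.IH stoch_grad_square_integrable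
    by (intro square_integrable_sum square_integrable_scaleR square_integrable_diff) auto
  then show ?case by (rule square_integrable_cong) (simp add: x_Suc stoch_grad_def z_iter_def)
qed

lemma consensus_error_nn_integral_finite:
  assumes "i < n"
  shows "(\<integral>\<^sup>+ \<omega>. ennreal ((norm (x_avg t \<omega> - z_iter t i \<omega>))\<^sup>2) \<partial>M) < \<infinity>"
proof -
  have "square_integrable M (\<lambda>\<omega>. x_avg t \<omega> - z_iter t i \<omega>)"
    unfolding x_avg_def z_iter_def using assms x_square_integrable
    by (intro square_integrable_diff square_integrable_scaleR square_integrable_sum) auto
  then show ?thesis by (simp add: square_integrable_def)
qed

definition consensus_sq_sum :: "nat \<Rightarrow> 'a \<Rightarrow> real" where
  "consensus_sq_sum T \<omega> = (\<Sum>t<T. \<Sum>i<n. (norm (x_avg t \<omega> - z_iter t i \<omega>))\<^sup>2)"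

lemma consensus_sq_sum_nonneg: "0 \<le> consensus_sq_sum T \<omega>"
  unfolding consensus_sq_sum_def by (intro sum_nonneg) auto

lemma consensus_sq_sum_measurable [measurable]: "consensus_sq_sum T \<in> borel_measurable M"
  unfolding consensus_sq_sum_def by measurable

lemma consensus_sq_sum_le_pointwise:
  fixes C q X0 :: real
  assumes q: "0 \<le> q" "q < 1"
    and bound: "\<forall>t. \<forall>i<n. norm (x_avg t \<omega> - z_iter t i \<omega>)
      \<le> C * q ^ t * X0 + \<eta> * C * (\<Sum>s\<le>t. q ^ (t - s) * Max ((\<lambda>j. norm (stoch_grad s j \<omega>)) ` {..<n}))"
  defines "K \<equiv> \<eta>\<^sup>2 * C\<^sup>2 / (1 - q)\<^sup>2"
  shows "1 / real n * consensus_sq_sum T \<omega>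
    \<le> 3 * C\<^sup>2 * X0\<^sup>2 / (1 - q)\<^sup>2 + 9 * K * real n * \<zeta>\<^sup>2 * real T
      + 3 * K * (\<Sum>t<T. \<Sum>j<n. (norm (stoch_grad t j \<omega> - Df j (z_iter t j \<omega>)))\<^sup>2)
      + 9 * K * L\<^sup>2 * consensus_sq_sum T \<omega> + 9 * K * (\<Sum>t<T. (norm (grad_f (x_avg t \<omega>)))\<^sup>2)"
proof -
  define G where "G s = Max ((\<lambda>j. norm (stoch_grad s j \<omega>)) ` {..<n})" for s
  have per_node: "(\<Sum>t<T. (norm (x_avg t \<omega> - z_iter t i \<omega>))\<^sup>2)
      \<le> 3 * (C * X0)\<^sup>2 / (1 - q)\<^sup>2 + 3 / 2 * (\<eta> * C)\<^sup>2 / (1 - q)\<^sup>2 * (\<Sum>s<T. (G s)\<^sup>2)" if "i < n" for i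
  proof (rule sum_square_le_of_geometric_bound[OF q])
    show "norm (x_avg t \<omega> - z_iter t i \<omega>) \<le> C * X0 * q ^ t + \<eta> * C * (\<Sum>s\<le>t. q ^ (t - s) * G s)" for t
      using bound that unfolding G_def by (simp add: ac_simps)
  qed simp
  have "1 / real n * consensus_sq_sum T \<omega> = 1 / real n * (\<Sum>i<n. \<Sum>t<T. (norm (x_avg t \<omega> - z_iter t i \<omega>))\<^sup>2)"
    unfolding consensus_sq_sum_def by (subst sum.swap) simp
  also have "\<dots> \<le> 1 / real n * (\<Sum>i<n. 3 * (C * X0)\<^sup>2 / (1 - q)\<^sup>2 + 3 / 2 * (\<eta> * C)\<^sup>2 / (1 - q)\<^sup>2 * (\<Sum>s<T. (G s)\<^sup>2))"
    using per_node by (intro mult_left_mono sum_mono) auto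
  also have "\<dots> = 3 * C\<^sup>2 * X0\<^sup>2 / (1 - q)\<^sup>2 + 3 / 2 * K * (\<Sum>s<T. (G s)\<^sup>2)"
    using n_pos by (simp add: K_def power_mult_distrib)
  also have "\<dots> \<le> 3 * C\<^sup>2 * X0\<^sup>2 / (1 - q)\<^sup>2 + 3 / 2 * K * (2 * (\<Sum>t<T. \<Sum>j<n. (norm (stoch_grad t j \<omega> - Df j (z_iter t j \<omega>)))\<^sup>2)
      + 6 * L\<^sup>2 * consensus_sq_sum T \<omega> + 6 * real n * \<zeta>\<^sup>2 * real T + 6 * (\<Sum>t<T. (norm (grad_f (x_avg t \<omega>)))\<^sup>2))"
  proof -
    have "(G s)\<^sup>2 \<le> 2 * (\<Sum>j<n. (norm (stoch_grad s j \<omega> - Df j (z_iter s j \<omega>)))\<^sup>2)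
        + 6 * L\<^sup>2 * (\<Sum>j<n. (norm (x_avg s \<omega> - z_iter s j \<omega>))\<^sup>2) + 6 * real n * \<zeta>\<^sup>2
        + 6 * (norm (grad_f (x_avg s \<omega>)))\<^sup>2" for s
      unfolding G_def grad_f_def
      by (rule Max_norm_square_le_gradient_split[OF n_pos Df_lipschitz heterogeneity])
    then have "(\<Sum>s<T. (G s)\<^sup>2) \<le> (\<Sum>s<T. 2 * (\<Sum>j<n. (norm (stoch_grad s j \<omega> - Df j (z_iter s j \<omega>)))\<^sup>2)
        + 6 * L\<^sup>2 * (\<Sum>j<n. (norm (x_avg s \<omega> - z_iter s j \<omega>))\<^sup>2) + 6 * real n * \<zeta>\<^sup>2
        + 6 * (norm (grad_f (x_avg s \<omega>)))\<^sup>2)"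
      by (rule sum_mono)
    also have "\<dots> = 2 * (\<Sum>t<T. \<Sum>j<n. (norm (stoch_grad t j \<omega> - Df j (z_iter t j \<omega>)))\<^sup>2)
        + 6 * L\<^sup>2 * consensus_sq_sum T \<omega> + 6 * real n * \<zeta>\<^sup>2 * real T + 6 * (\<Sum>t<T. (norm (grad_f (x_avg t \<omega>)))\<^sup>2)"
      by (simp add: consensus_sq_sum_def sum.distrib sum_distrib_left)
    finally show ?thesis by (intro add_left_mono mult_left_mono) (auto simp: K_def)
  qed
  also have "\<dots> = 3 * C\<^sup>2 * X0\<^sup>2 / (1 - q)\<^sup>2 + 9 * K * real n * \<zeta>\<^sup>2 * real T
      + 3 * K * (\<Sum>t<T. \<Sum>j<n. (norm (stoch_grad t j \<omega> - Df j (z_iter t j \<omega>)))\<^sup>2)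
      + 9 * K * L\<^sup>2 * consensus_sq_sum T \<omega> + 9 * K * (\<Sum>t<T. (norm (grad_f (x_avg t \<omega>)))\<^sup>2)"
    by (simp add: algebra_simps)
  finally show ?thesis .
qed

lemma gradient_noise_sum_le:
  "(\<integral>\<^sup>+ \<omega>. ennreal (\<Sum>t<T. \<Sum>j<n. (norm (stoch_grad t j \<omega> - Df j (z_iter t j \<omega>)))\<^sup>2) \<partial>M)
    \<le> ennreal (real T * real n * \<sigma>\<^sup>2)"
proof -
  have "(\<integral>\<^sup>+ \<omega>. ennreal (\<Sum>t<T. \<Sum>j<n. (norm (stoch_grad t j \<omega> - Df j (z_iter t j \<omega>)))\<^sup>2) \<partial>M)
      = (\<Sum>t<T. \<Sum>j<n. \<integral>\<^sup>+ \<omega>. ennreal ((norm (stoch_grad t j \<omega> - Df j (z_iter t j \<omega>)))\<^sup>2) \<partial>M)"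
    by (simp add: sum_nonneg nn_integral_sum flip: sum_ennreal)
      (intro sum.cong refl nn_integral_sum, measurable)
  also have "\<dots> \<le> (\<Sum>t<T. \<Sum>j<n. ennreal (\<sigma>\<^sup>2))"
    by (intro sum_mono gradient_noise_le) simp
  also have "\<dots> = ennreal (real T * real n * \<sigma>\<^sup>2)"
    by (simp add: ennreal_of_nat_eq_real_of_nat ennreal_mult mult.assoc)
  finally show ?thesis .
qed

lemma consensus_sq_sum_nn_integral_le:
  fixes C q X0 :: real
  assumes q: "0 \<le> q" "q < 1"
    and bound: "AE \<omega> in M. \<forall>t. \<forall>i<n. norm (x_avg t \<omega> - z_iter t i \<omega>)
      \<le> C * q ^ t * X0 + \<eta> * C * (\<Sum>s\<le>t. q ^ (t - s) * Max ((\<lambda>j. norm (stoch_grad s j \<omega>)) ` {..<n}))"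
  defines "K \<equiv> \<eta>\<^sup>2 * C\<^sup>2 / (1 - q)\<^sup>2"
  shows "ennreal (1 / real n) * (\<integral>\<^sup>+ \<omega>. ennreal (consensus_sq_sum T \<omega>) \<partial>M)
    \<le> ennreal (3 * C\<^sup>2 * X0\<^sup>2 / (1 - q)\<^sup>2 + 9 * K * real n * \<zeta>\<^sup>2 * real T + 3 * K * (real T * real n * \<sigma>\<^sup>2))
      + ennreal (9 * K * L\<^sup>2) * (\<integral>\<^sup>+ \<omega>. ennreal (consensus_sq_sum T \<omega>) \<partial>M)
      + ennreal (9 * K) * (\<Sum>t<T. \<integral>\<^sup>+ \<omega>. ennreal ((norm (grad_f (x_avg t \<omega>)))\<^sup>2) \<partial>M)"
proof -
  define a where "a = 3 * C\<^sup>2 * X0\<^sup>2 / (1 - q)\<^sup>2 + 9 * K * real n * \<zeta>\<^sup>2 * real T"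
  define N where "N \<omega> = (\<Sum>t<T. \<Sum>j<n. (norm (stoch_grad t j \<omega> - Df j (z_iter t j \<omega>)))\<^sup>2)" for \<omega>
  define R where "R \<omega> = (\<Sum>t<T. (norm (grad_f (x_avg t \<omega>)))\<^sup>2)" for \<omega>
  have [measurable]: "N \<in> borel_measurable M" "R \<in> borel_measurable M"
    unfolding N_def R_def by measurable
  have nonneg: "0 \<le> K" "0 \<le> a" "0 \<le> N \<omega>" "0 \<le> R \<omega>" for \<omega>
    using q by (auto simp: K_def a_def N_def R_def intro!: sum_nonneg)
  have "AE \<omega> in M. ennreal (1 / real n) * ennreal (consensus_sq_sum T \<omega>)
      \<le> ennreal a + ennreal (3 * K) * ennreal (N \<omega>)
        + ennreal (9 * K * L\<^sup>2) * ennreal (consensus_sq_sum T \<omega>) + ennreal (9 * K) * ennreal (R \<omega>)"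
    using bound
  proof eventually_elim
    case (elim \<omega>)
    have "1 / real n * consensus_sq_sum T \<omega>
        \<le> a + 3 * K * N \<omega> + 9 * K * L\<^sup>2 * consensus_sq_sum T \<omega> + 9 * K * R \<omega>"
      using consensus_sq_sum_le_pointwise[OF q elim, of T] by (simp add: a_def N_def R_def K_def)
    then have "ennreal (1 / real n * consensus_sq_sum T \<omega>)
        \<le> ennreal (a + 3 * K * N \<omega> + 9 * K * L\<^sup>2 * consensus_sq_sum T \<omega> + 9 * K * R \<omega>)"
      by (rule ennreal_leI)
    moreover have "ennreal (1 / real n * consensus_sq_sum T \<omega>) = ennreal (1 / real n) * ennreal (consensus_sq_sum T \<omega>)"
      using consensus_sq_sum_nonneg by (intro ennreal_mult) auto
    ultimately show ?case
      using nonneg consensus_sq_sum_nonneg[of T \<omega>] by (simp add: ennreal_mult)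
  qed
  then have "ennreal (1 / real n) * (\<integral>\<^sup>+ \<omega>. ennreal (consensus_sq_sum T \<omega>) \<partial>M)
      \<le> (\<integral>\<^sup>+ \<omega>. ennreal a + ennreal (3 * K) * ennreal (N \<omega>)
        + ennreal (9 * K * L\<^sup>2) * ennreal (consensus_sq_sum T \<omega>) + ennreal (9 * K) * ennreal (R \<omega>) \<partial>M)"
    by (subst nn_integral_cmult[symmetric]) (auto intro: nn_integral_mono_AE)
  also have "\<dots> = ennreal a + ennreal (3 * K) * (\<integral>\<^sup>+ \<omega>. ennreal (N \<omega>) \<partial>M)
      + ennreal (9 * K * L\<^sup>2) * (\<integral>\<^sup>+ \<omega>. ennreal (consensus_sq_sum T \<omega>) \<partial>M)
      + ennreal (9 * K) * (\<integral>\<^sup>+ \<omega>. ennreal (R \<omega>) \<partial>M)"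
    by (simp add: nn_integral_add nn_integral_cmult emeasure_space_1)
  also have "\<dots> \<le> ennreal a + ennreal (3 * K) * ennreal (real T * real n * \<sigma>\<^sup>2)
      + ennreal (9 * K * L\<^sup>2) * (\<integral>\<^sup>+ \<omega>. ennreal (consensus_sq_sum T \<omega>) \<partial>M)
      + ennreal (9 * K) * (\<Sum>t<T. \<integral>\<^sup>+ \<omega>. ennreal ((norm (grad_f (x_avg t \<omega>)))\<^sup>2) \<partial>M)"
    using gradient_noise_sum_le[of T]
    by (intro add_mono mult_left_mono order_refl) (auto simp: N_def R_def nn_integral_sum simp flip: sum_ennreal)
  also have "ennreal a + ennreal (3 * K) * ennreal (real T * real n * \<sigma>\<^sup>2)
      = ennreal (3 * C\<^sup>2 * X0\<^sup>2 / (1 - q)\<^sup>2 + 9 * K * real n * \<zeta>\<^sup>2 * real T + 3 * K * (real T * real n * \<sigma>\<^sup>2))"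
    using nonneg by (simp add: a_def ennreal_mult)
  finally show ?thesis .
qed

lemma consensus_error_sum_le:
  fixes C q X0 P :: real
  assumes q: "0 \<le> q" "q < 1"
    and bound: "AE \<omega> in M. \<forall>t. \<forall>i<n. norm (x_avg t \<omega> - z_iter t i \<omega>)
      \<le> C * q ^ t * X0 + \<eta> * C * (\<Sum>s\<le>t. q ^ (t - s) * Max ((\<lambda>j. norm (stoch_grad s j \<omega>)) ` {..<n}))"
    and P: "P = 1 - 9 * \<eta>\<^sup>2 * C\<^sup>2 * L\<^sup>2 * real n / (1 - q)\<^sup>2" "0 < P"
  shows "(\<Sum>t<T. ennreal (1 / real n) * (\<Sum>i<n. \<integral>\<^sup>+ \<omega>. ennreal ((norm (x_avg t \<omega> - z_iter t i \<omega>))\<^sup>2) \<partial>M))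
    \<le> ennreal (3 * C\<^sup>2 / (P * (1 - q)\<^sup>2) * X0\<^sup>2)
      + ennreal (3 * \<eta>\<^sup>2 * C\<^sup>2 * real n * \<sigma>\<^sup>2 / (P * (1 - q)\<^sup>2) * real T)
      + ennreal (9 * \<eta>\<^sup>2 * C\<^sup>2 * real n * \<zeta>\<^sup>2 / (P * (1 - q)\<^sup>2) * real T)
      + ennreal (9 * \<eta>\<^sup>2 * C\<^sup>2 / (P * (1 - q)\<^sup>2)) *
        (\<Sum>t<T. \<integral>\<^sup>+ \<omega>. ennreal ((norm (grad_f (x_avg t \<omega>)))\<^sup>2) \<partial>M)"
proof -
  define K where "K = \<eta>\<^sup>2 * C\<^sup>2 / (1 - q)\<^sup>2"
  define Y where "Y = (\<integral>\<^sup>+ \<omega>. ennreal (consensus_sq_sum T \<omega>) \<partial>M)"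
  have Y_eq: "Y = (\<Sum>t<T. \<Sum>i<n. \<integral>\<^sup>+ \<omega>. ennreal ((norm (x_avg t \<omega> - z_iter t i \<omega>))\<^sup>2) \<partial>M)"
    unfolding Y_def consensus_sq_sum_def
    by (simp add: sum_nonneg nn_integral_sum flip: sum_ennreal)
  have "Y < \<infinity>"
    unfolding Y_eq using consensus_error_nn_integral_finite by (simp add: less_top)
  moreover have "P = 1 - 9 * K * L\<^sup>2 / (1 / real n)"
    using P(1) by (simp add: K_def)
  ultimately have "ennreal (1 / real n) * Y
      \<le> ennreal ((3 * C\<^sup>2 * X0\<^sup>2 / (1 - q)\<^sup>2 + 9 * K * real n * \<zeta>\<^sup>2 * real T + 3 * K * (real T * real n * \<sigma>\<^sup>2)) / P)
        + ennreal (9 * K / P) * (\<Sum>t<T. \<integral>\<^sup>+ \<omega>. ennreal ((norm (grad_f (x_avg t \<omega>)))\<^sup>2) \<partial>M)"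
    using P(2) n_pos unfolding Y_def
    by (intro ennreal_mult_le_absorb[OF _ _ _ _ _ _ _ consensus_sq_sum_nn_integral_le[OF q bound, folded K_def]])
      (auto simp: K_def)
  also have "(3 * C\<^sup>2 * X0\<^sup>2 / (1 - q)\<^sup>2 + 9 * K * real n * \<zeta>\<^sup>2 * real T + 3 * K * (real T * real n * \<sigma>\<^sup>2)) / P
      = 3 * C\<^sup>2 / (P * (1 - q)\<^sup>2) * X0\<^sup>2 + 3 * \<eta>\<^sup>2 * C\<^sup>2 * real n * \<sigma>\<^sup>2 / (P * (1 - q)\<^sup>2) * real T
        + 9 * \<eta>\<^sup>2 * C\<^sup>2 * real n * \<zeta>\<^sup>2 / (P * (1 - q)\<^sup>2) * real T"
    by (simp add: K_def add_divide_distrib ac_simps)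
  also have "9 * K / P = 9 * \<eta>\<^sup>2 * C\<^sup>2 / (P * (1 - q)\<^sup>2)"
    by (simp add: K_def ac_simps)
  also have "ennreal (3 * C\<^sup>2 / (P * (1 - q)\<^sup>2) * X0\<^sup>2 + 3 * \<eta>\<^sup>2 * C\<^sup>2 * real n * \<sigma>\<^sup>2 / (P * (1 - q)\<^sup>2) * real T
        + 9 * \<eta>\<^sup>2 * C\<^sup>2 * real n * \<zeta>\<^sup>2 / (P * (1 - q)\<^sup>2) * real T)
      = ennreal (3 * C\<^sup>2 / (P * (1 - q)\<^sup>2) * X0\<^sup>2) + ennreal (3 * \<eta>\<^sup>2 * C\<^sup>2 * real n * \<sigma>\<^sup>2 / (P * (1 - q)\<^sup>2) * real T)
        + ennreal (9 * \<eta>\<^sup>2 * C\<^sup>2 * real n * \<zeta>\<^sup>2 / (P * (1 - q)\<^sup>2) * real T)"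
    using P(2) by simp
  finally show ?thesis
    by (simp add: Y_eq sum_distrib_left)
qed

end

theorem lemmaA5:
  fixes n :: nat
    and E :: "(nat \<times> nat) set"
    and W :: "nat \<Rightarrow> nat \<Rightarrow> nat \<Rightarrow> real"
    and M :: "'a measure"
    and S :: "'b measure"
    and \<xi> :: "nat \<Rightarrow> nat \<Rightarrow> 'a \<Rightarrow> 'b"
    and g :: "nat \<Rightarrow> 'd::euclidean_space \<Rightarrow> 'b \<Rightarrow> 'd"
    and f :: "nat \<Rightarrow> 'd \<Rightarrow> real"
    and Df :: "nat \<Rightarrow> 'd \<Rightarrow> 'd"
    and x0 :: "nat \<Rightarrow> 'd"
    and x :: "nat \<Rightarrow> nat \<Rightarrow> 'a \<Rightarrow> 'd"
    and w :: "nat \<Rightarrow> nat \<Rightarrow> real"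
    and \<eta> L \<sigma> \<zeta> \<delta> C q P :: real
    and B \<Delta> T :: nat
  assumes n2: "n \<ge> 2"
    \<comment> \<open>base topology: bidirected, with self-loops\<close>
    and E_sub: "E \<subseteq> {..<n} \<times> {..<n}"
    and E_bidir: "\<And>i j. (j, i) \<in> E \<Longrightarrow> (i, j) \<in> E"
    and E_loops: "\<And>i. i < n \<Longrightarrow> (i, i) \<in> E"
    \<comment> \<open>nonnegative column-stochastic mixing matrices supported on E\<close>
    and W_nonneg: "\<And>t i j. W t i j \<ge> 0"
    and W_colstoch: "\<And>t j. j < n \<Longrightarrow> (\<Sum>i<n. W t i j) = 1"
    and W_supp: "\<And>t i j. W t i j \<noteq> 0 \<Longrightarrow> (j, i) \<in> E"
    \<comment> \<open>delta = min over t of the smallest positive entry of W^(t)\<close>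
    and \<delta>_def: "\<delta> = Inf {W t i j |t i j. i < n \<and> j < n \<and> W t i j > 0}"
    and \<delta>_pos: "\<delta> > 0"
    \<comment> \<open>Assumption (4)\<close>
    and B_pos: "B > 0" and \<Delta>_pos: "\<Delta> > 0"
    and conn: "\<And>l. strongly_connected_diam_le {..<n}
                 (\<Union>t\<in>{l * B..<(l + 1) * B}. active_edges E W t) \<Delta>"
    and C_def: "C = 4 / \<delta> ^ (\<Delta> * B)"
    and q_def: "q = root (\<Delta> * B) (1 - \<delta> ^ (\<Delta> * B))"
    \<comment> \<open>Assumption (1): L-smoothness of each f_i, with gradient Df i\<close>
    and f_grad: "\<And>i z. i < n \<Longrightarrow> (f i has_derivative (\<lambda>h. Df i z \<bullet> h)) (at z)"
    and f_smooth: "\<And>i y z. i < n \<Longrightarrow> norm (Df i y - Df i z) \<le> L * norm (y - z)"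
    \<comment> \<open>stochastic gradients with fresh independent minibatches\<close>
    and prob: "prob_space M"
    and \<xi>_meas: "\<And>j t. \<xi> j t \<in> M \<rightarrow>\<^sub>M S"
    and \<xi>_indep: "prob_space.indep_vars M (\<lambda>_. S) (\<lambda>(j, t). \<xi> j t) ({..<n} \<times> UNIV)"
    and g_meas: "\<And>j. j < n \<Longrightarrow> (\<lambda>(y, b). g j y b) \<in> borel \<Otimes>\<^sub>M S \<rightarrow>\<^sub>M borel"
    \<comment> \<open>Assumption (2): bounded variance\<close>
    and var: "\<And>j t y. j < n \<Longrightarrow>
       (\<integral>\<^sup>+ \<omega>. ennreal ((norm (g j y (\<xi> j t \<omega>) - Df j y))\<^sup>2) \<partial>M) \<le> ennreal (\<sigma>\<^sup>2)"
    \<comment> \<open>Assumption (3): bounded heterogeneity, with grad f = (1/n) sum_i grad f_i\<close>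
    and het: "\<And>y. (1 / real n) * (\<Sum>i<n. (norm (Df i y - (1 / real n) *\<^sub>R (\<Sum>k<n. Df k y)))\<^sup>2)
               \<le> \<zeta>\<^sup>2"
    \<comment> \<open>SGP iterates (x^(0) deterministic)\<close>
    and x_init: "\<And>i \<omega>. \<omega> \<in> space M \<Longrightarrow> x 0 i \<omega> = x0 i"
    and x_step: "\<And>t i \<omega>. \<omega> \<in> space M \<Longrightarrow> x (Suc t) i \<omega> =
       (\<Sum>j<n. W t i j *\<^sub>R (x t j \<omega> - \<eta> *\<^sub>R g j ((1 / w t j) *\<^sub>R x t j \<omega>) (\<xi> j t \<omega>)))"
    and w_init: "\<And>i. w 0 i = 1"
    and w_step: "\<And>t i. w (Suc t) i = (\<Sum>j<n. W t i j * w t j)"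
    \<comment> \<open>almost-sure consensus error bound\<close>
    and as_bound: "AE \<omega> in M. \<forall>t. \<forall>i<n.
       norm ((1 / real n) *\<^sub>R (\<Sum>m<n. x t m \<omega>) - (1 / w t i) *\<^sub>R x t i \<omega>)
       \<le> C * q ^ t * Max ((\<lambda>m. norm (x0 m)) ` {..<n})
         + \<eta> * C * (\<Sum>s\<le>t. q ^ (t - s) *
             Max ((\<lambda>j. norm (g j ((1 / w s j) *\<^sub>R x s j \<omega>) (\<xi> j s \<omega>))) ` {..<n}))"
    and P_def: "P = 1 - 9 * \<eta>\<^sup>2 * C\<^sup>2 * L\<^sup>2 * real n / (1 - q)\<^sup>2"
    and P_pos: "P > 0"
    and T1: "T \<ge> 1"
  shows "(\<Sum>t<T. ennreal (1 / real n) * (\<Sum>i<n. \<integral>\<^sup>+ \<omega>.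
            ennreal ((norm ((1 / real n) *\<^sub>R (\<Sum>m<n. x t m \<omega>) - (1 / w t i) *\<^sub>R x t i \<omega>))\<^sup>2) \<partial>M))
    \<le> ennreal (3 * C\<^sup>2 / (P * (1 - q)\<^sup>2) * (Max ((\<lambda>m. norm (x0 m)) ` {..<n}))\<^sup>2)
      + ennreal (3 * \<eta>\<^sup>2 * C\<^sup>2 * real n * \<sigma>\<^sup>2 / (P * (1 - q)\<^sup>2) * real T)
      + ennreal (9 * \<eta>\<^sup>2 * C\<^sup>2 * real n * \<zeta>\<^sup>2 / (P * (1 - q)\<^sup>2) * real T)
      + ennreal (9 * \<eta>\<^sup>2 * C\<^sup>2 / (P * (1 - q)\<^sup>2)) *
        (\<Sum>t<T. \<integral>\<^sup>+ \<omega>. ennreal ((norm ((1 / real n) *\<^sub>R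
            (\<Sum>k<n. Df k ((1 / real n) *\<^sub>R (\<Sum>m<n. x t m \<omega>)))))\<^sup>2) \<partial>M)"
proof -
  interpret sgp M S n W w \<eta> g \<xi> x0 x Df L \<sigma> \<zeta>
    by (intro sgp.intro sgp_axioms.intro prob)
      (use n2 \<xi>_meas \<xi>_indep g_meas f_smooth var het x_init x_step in auto)
  have "\<delta> \<le> 1"
    unfolding \<delta>_def using n2 W_nonneg W_colstoch by (intro Inf_positive_entries_le_one) auto
  then have "0 < \<delta> ^ (\<Delta> * B)" "\<delta> ^ (\<Delta> * B) \<le> 1"
    using \<delta>_pos by (auto intro: power_le_one)
  then have q: "0 \<le> q" "q < 1"
    unfolding q_def using B_pos \<Delta>_pos by auto
  have "AE \<omega> in M. \<forall>t. \<forall>i<n. norm (x_avg t \<omega> - z_iter t i \<omega>)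
      \<le> C * q ^ t * Max ((\<lambda>m. norm (x0 m)) ` {..<n})
        + \<eta> * C * (\<Sum>s\<le>t. q ^ (t - s) * Max ((\<lambda>j. norm (stoch_grad s j \<omega>)) ` {..<n}))"
    using as_bound by (simp add: x_avg_def z_iter_def stoch_grad_def)
  from consensus_error_sum_le[OF q this P_def P_pos, of T] show ?thesis
    by (simp only: x_avg_def z_iter_def grad_f_def)
qed

end
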